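(* Fix a uniformity $r\ge2$, positive integers $\ell>r$ and $s$, and a nonnegative integer $t$. Every $C_{s\ell+rt}^{(r)}$-hom-free $r$-graph is also $C_\ell^{(r)}$-hom-free.
   Context: An $r$-graph is an $r$-uniform hypergraph. For $m>r$, the tight cycle $C_m^{(r)}$ has vertices $v_1,\dots,v_m$ and edges $\{v_i,\dots,v_{i+r-1}\}$, $1\le i\le m$ (indices mod $m$). A homomorphism $F\to G$ is a map $V(F)\to V(G)$ sending each edge of $F$ onto an edge of $G$; $G$ is $F$-hom-free if there is no homomorphism $F\to G$. *)

theory Defs
  imports Main
begin

definition r_graph :: "nat \<Rightarrow> 'a set \<Rightarrow> 'a set set \<Rightarrow> bool" where
  "r_graph r V E \<longleftrightarrow> finite V \<and> (\<forall>e\<in>E. e \<subseteq> V \<and> card e = r)"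

definition tight_cycle_vertices :: "nat \<Rightarrow> nat set" where
  "tight_cycle_vertices m = {..<m}"

definition tight_cycle_edges :: "nat \<Rightarrow> nat \<Rightarrow> nat set set" where
  "tight_cycle_edges r m = {{(i + j) mod m | j. j < r} | i. i < m}"

definition hom :: "'a set \<Rightarrow> 'a set set \<Rightarrow> 'b set \<Rightarrow> 'b set set \<Rightarrow> ('a \<Rightarrow> 'b) \<Rightarrow> bool" where
  "hom VF EF VG EG f \<longleftrightarrow> (\<forall>v\<in>VF. f v \<in> VG) \<and> (\<forall>e\<in>EF. f ` e \<in> EG)"

definition hom_free :: "'a set \<Rightarrow> 'a set set \<Rightarrow> 'b set \<Rightarrow> 'b set set \<Rightarrow> bool" where
  "hom_free VF EF VG EG \<longleftrightarrow> \<not> (\<exists>f. hom VF EF VG EG f)"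

definition tight_cycle_hom_free :: "nat \<Rightarrow> nat \<Rightarrow> 'b set \<Rightarrow> 'b set set \<Rightarrow> bool" where
  "tight_cycle_hom_free r m V E \<longleftrightarrow>
     hom_free (tight_cycle_vertices m) (tight_cycle_edges r m) V E"

end

theory Submission
  imports Defs
begin

text \<open>Winding s times around C_l gives a homomorphism C_(s l) \<rightarrow> C_l, v \<mapsto> v mod l.
  Folding the vertices r, ..., 2r-1 of C_(m+r) onto 0, ..., r-1 gives C_(m+r) \<rightarrow> C_m
  whenever r \<le> m: each edge meeting the first 2r vertices is sent onto the edge
  {0, ..., r-1}, and every other edge is shifted back by r. Composing, C_(s l + r t) maps
  to C_l, so a homomorphism C_l \<rightarrow> G would yield one from C_(s l + r t).\<close>

lemma hom_comp:
  assumes "hom VF EF VG EG g" and "hom VG EG VH EH f"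
  shows "hom VF EF VH EH (f \<circ> g)"
  using assms unfolding hom_def by (metis comp_apply image_comp)

lemma hom_free_by_hom:
  assumes "hom VF EF VG EG g" and "hom_free VF EF VH EH"
  shows "hom_free VG EG VH EH"
  using assms hom_comp unfolding hom_free_def by blast

definition tight_edge :: "nat \<Rightarrow> nat \<Rightarrow> nat \<Rightarrow> nat set" where
  "tight_edge r m i = (\<lambda>j. (i + j) mod m) ` {..<r}"

lemma tight_cycle_edges_eq: "tight_cycle_edges r m = tight_edge r m ` {..<m}"
  unfolding tight_cycle_edges_def tight_edge_def by blast

lemma image_tight_edge_eq:
  assumes "\<And>j. j < r \<Longrightarrow> g ((i + j) mod n) = (k + j) mod m"
  shows "g ` tight_edge r n i = tight_edge r m k"
  using assms unfolding tight_edge_def image_image by (intro image_cong) auto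

abbreviation tight_cycle_hom :: "nat \<Rightarrow> nat \<Rightarrow> nat \<Rightarrow> (nat \<Rightarrow> nat) \<Rightarrow> bool" where
  "tight_cycle_hom r n m g \<equiv>
     hom (tight_cycle_vertices n) (tight_cycle_edges r n) (tight_cycle_vertices m) (tight_cycle_edges r m) g"

lemma tight_cycle_homI:
  assumes "\<And>v. v < n \<Longrightarrow> g v < m"
    and "\<And>i. i < n \<Longrightarrow> \<exists>k<m. g ` tight_edge r n i = tight_edge r m k"
  shows "tight_cycle_hom r n m g"
  using assms unfolding hom_def tight_cycle_vertices_def tight_cycle_edges_eq by fastforce

lemma tight_cycle_hom_free_by_hom:
  assumes "tight_cycle_hom r n m g" and "tight_cycle_hom_free r n V E"
  shows "tight_cycle_hom_free r m V E"
  using assms hom_free_by_hom unfolding tight_cycle_hom_free_def by blast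

lemma tight_cycle_hom_wrap: "tight_cycle_hom r (s * l) l (\<lambda>v. v mod l)"
proof (rule tight_cycle_homI)
  fix i assume "i < s * l"
  then have "0 < l" by (cases "l = 0") auto
  moreover have "(\<lambda>v. v mod l) ` tight_edge r (s * l) i = tight_edge r l (i mod l)"
    by (rule image_tight_edge_eq) (simp add: mod_mod_cancel mod_add_left_eq)
  ultimately show "\<exists>k<l. (\<lambda>v. v mod l) ` tight_edge r (s * l) i = tight_edge r l k"
    by (metis mod_less_divisor)
qed (cases "l = 0", auto)

definition cycle_fold :: "nat \<Rightarrow> nat \<Rightarrow> nat" where
  "cycle_fold r v = (if v < r then v else v - r)"

lemma tight_edge_fold_initial:
  assumes "i < r" and "r \<le> m"
  shows "cycle_fold r ` tight_edge r (m + r) i = tight_edge r m 0"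
proof -
  let ?h = "\<lambda>j. if i + j < r then i + j else i + j - r"
  have "cycle_fold r ` tight_edge r (m + r) i = ?h ` {..<r}"
    using assms unfolding tight_edge_def image_image cycle_fold_def by (intro image_cong) auto
  also have "?h ` {..<r} = {..<r}"
  proof
    show "{..<r} \<subseteq> ?h ` {..<r}"
    proof
      fix x assume "x \<in> {..<r}"
      then show "x \<in> ?h ` {..<r}"
        using assms(1) by (intro rev_image_eqI[of "if i \<le> x then x - i else x + r - i"]) auto
    qed
  qed (use assms(1) in auto)
  also have "{..<r} = tight_edge r m 0"
    using assms(2) unfolding tight_edge_def by (auto simp: image_iff)
  finally show ?thesis .
qed

lemma tight_edge_fold_shift:
  assumes "r \<le> i" and "i < m + r" and "r \<le> m"
  shows "cycle_fold r ` tight_edge r (m + r) i = tight_edge r m (i - r)"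
proof (rule image_tight_edge_eq)
  fix j assume "j < r"
  show "cycle_fold r ((i + j) mod (m + r)) = (i - r + j) mod m"
  proof (cases "i + j < m + r")
    case True
    then show ?thesis using assms by (simp add: cycle_fold_def)
  next
    case False
    have "(i + j) mod (m + r) = i + j - (m + r)"
      using False assms \<open>j < r\<close> by (simp add: mod_if)
    moreover have "(i - r + j) mod m = i - r + j - m"
      using False assms \<open>j < r\<close> by (simp add: mod_if)
    ultimately show ?thesis using assms \<open>j < r\<close> by (simp add: cycle_fold_def add.commute)
  qed
qed

lemma tight_cycle_hom_fold:
  assumes "r \<le> m"
  shows "tight_cycle_hom r (m + r) m (cycle_fold r)"
proof (rule tight_cycle_homI)
  fix i assume "i < m + r"
  show "\<exists>k<m. cycle_fold r ` tight_edge r (m + r) i = tight_edge r m k"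
  proof (cases "i < r")
    case True
    then show ?thesis using assms tight_edge_fold_initial[of i r m] by (intro exI[of _ 0]) auto
  next
    case False
    then show ?thesis using assms \<open>i < m + r\<close> tight_edge_fold_shift[of r i m]
      by (intro exI[of _ "i - r"]) auto
  qed
qed (use assms in \<open>auto simp: cycle_fold_def\<close>)

lemma tight_cycle_hom_add_multiple:
  assumes "r \<le> m"
  shows "\<exists>g. tight_cycle_hom r (m + r * t) m g"
proof (induction t)
  case 0
  have "tight_cycle_hom r m m id"
    unfolding hom_def by simp
  then show ?case by auto
next
  case (Suc t)
  then obtain g where "tight_cycle_hom r (m + r * t) m g" by blast
  moreover have "tight_cycle_hom r (m + r * t + r) (m + r * t) (cycle_fold r)"
    by (intro tight_cycle_hom_fold) (use assms in simp)
  ultimately have "\<exists>g. tight_cycle_hom r (m + r * t + r) m g"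
    using hom_comp by blast
  moreover have "m + r * Suc t = m + r * t + r" by simp
  ultimately show ?case by (simp only:)
qed

theorem proposition2p3:
  fixes r l s t :: nat and V :: "'a set" and E :: "'a set set"
  assumes "r \<ge> 2" and "l > r" and "s > 0"
    and "r_graph r V E"
    and "tight_cycle_hom_free r (s * l + r * t) V E"
  shows "tight_cycle_hom_free r l V E"
proof -
  have "l \<le> s * l"
    using assms(3) by simp
  then have "r \<le> s * l"
    using assms(2) by linarith
  then obtain g where "tight_cycle_hom r (s * l + r * t) (s * l) g"
    using tight_cycle_hom_add_multiple by blast
  then have "tight_cycle_hom r (s * l + r * t) l ((\<lambda>v. v mod l) \<circ> g)"
    using hom_comp tight_cycle_hom_wrap by blast
  then show ?thesis
    using assms(5) tight_cycle_hom_free_by_hom by blast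
qed

end
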